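(* Let $\mu_\alpha,\mu_\beta$ satisfy Assumption B (see context). Let $\mathcal{E}$ be a compact interval with $\mathrm{supp}(\mu_\alpha\boxplus\mu_\beta)\subset\mathcal{E}$ and $\mathcal{J}:=\{E+i\eta:\ E\in\mathcal{E},\ 0\le\eta\le1\}$. Let $\mathcal{O}_\alpha$ be an open set containing $\{E:\ m_{\mu_\alpha}(E)=0\}$ and $\mathcal{O}_\beta$ an open set containing $\{E:\ m_{\mu_\beta}(E)=0\}$. Then there exist constants $c_1^\alpha,c_2^\alpha,c_3^\alpha,c_1^\beta,c_2^\beta,c_3^\beta>0$ such that $$\inf_{z\in\mathcal{J}\setminus\mathcal{O}_\beta}I_{\mu_\alpha}(\omega_\beta(z))\ge c_1^\alpha,\quad \inf_{z\in\mathcal{J}\setminus\mathcal{O}_\beta}I_{\widehat\mu_\alpha}(\omega_\beta(z))\ge c_2^\alpha,\quad \sup_{z\in\mathcal{J}\setminus\mathcal{O}_\beta}I_{\widehat\mu_\alpha}(\omega_\beta(z))\le c_3^\alpha,$$ $$\inf_{z\in\mathcal{J}\setminus\mathcal{O}_\alpha}I_{\mu_\beta}(\omega_\alpha(z))\ge c_1^\beta,\quad \inf_{z\in\mathcal{J}\setminus\mathcal{O}_\alpha}I_{\widehat\mu_\beta}(\omega_\alpha(z))\ge c_2^\beta,\quad \sup_{z\in\mathcal{J}\setminus\mathcal{O}_\alpha}I_{\widehat\mu_\beta}(\omega_\alpha(z))\le c_3^\beta.$$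
   Context: Assumption B: $\mu_\alpha,\mu_\beta$ are absolutely continuous, centered Borel probability measures on $\mathbb{R}$; $\mu_\alpha$ is supported on $n_\alpha\ge1$ disjoint intervals $[A_j^-,A_j^+]$ and $\mu_\beta$ on $n_\beta\ge1$ disjoint intervals $[B_j^-,B_j^+]$; their densities satisfy power laws at the endpoints of each interval with exponents in $(-1,1)$ (e.g. $C^{-1}<\rho_\alpha(x)/\big((x-A_j^-)^{s_j^-}(A_j^+-x)^{s_j^+}\big)<C$ a.e. on $[A_j^-,A_j^+]$, $-1<s_j^\pm<1$; analogously for $\rho_\beta$). $m_\nu(z)=\int\frac{1}{x-z}\nu(dx)$, $F_\nu=-1/m_\nu$, $I_\nu(\omega)=\int\frac{1}{|x-\omega|^2}\nu(dx)$. Subordination functions: analytic $\omega_\alpha,\omega_\beta:\mathbb{C}^+\to\mathbb{C}^+$ with $\mathrm{Im}\,\omega_{\alpha},\mathrm{Im}\,\omega_\beta\ge\mathrm{Im}\,z$, $\omega_{\alpha}(i\eta)/(i\eta),\omega_\beta(i\eta)/(i\eta)\to1$, and $\omega_\alpha+\omega_\beta-z=F_{\mu_\alpha}\circ\omega_\beta=F_{\mu_\beta}\circ\omega_\alpha$; they extend continuously to $\mathbb{C}^+\cup\mathbb{R}$. $\mu_\alpha\boxplus\mu_\beta$ has $F_{\mu_\alpha\boxplus\mu_\beta}=F_{\mu_\alpha}\circ\omega_\beta$. $\widehat\mu_\alpha$ is the finite Borel measure with $F_{\mu_\alpha}(\omega)-\omega=\int\frac{1}{x-\omega}\widehat\mu_\alpha(dx)$,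 $\omega\in\mathbb{C}^+$; similarly $\widehat\mu_\beta$. *)

theory Defs
  imports "HOL-Probability.Probability"
begin

definition stieltjes :: "real measure \<Rightarrow> complex \<Rightarrow> complex" where
  "stieltjes \<nu> z = (\<integral>x. 1 / (complex_of_real x - z) \<partial>\<nu>)"

definition F_tr :: "real measure \<Rightarrow> complex \<Rightarrow> complex" where
  "F_tr \<nu> z = - 1 / stieltjes \<nu> z"

text \<open>I_nu(omega) = int 1/|x - omega|^2 nu(dx) (as an extended nonnegative real,
  so that it is always defined).\<close>
definition I_tr :: "real measure \<Rightarrow> complex \<Rightarrow> ennreal" where
  "I_tr \<nu> w = (\<integral>\<^sup>+ x. ennreal (1 / (cmod (complex_of_real x - w))\<^sup>2) \<partial>\<nu>)"

definition stieltjes_zero_set :: "real measure \<Rightarrow> real set" where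
  "stieltjes_zero_set \<nu> =
     {E. ((\<lambda>\<eta>. stieltjes \<nu> (Complex E \<eta>)) \<longlongrightarrow> 0) (at_right 0)}"

definition msupport :: "real measure \<Rightarrow> real set" where
  "msupport \<nu> = {x. \<forall>e>0. emeasure \<nu> (ball x e) > 0}"

definition assumption_B :: "real measure \<Rightarrow> bool" where
  "assumption_B \<mu> \<longleftrightarrow>
     prob_space \<mu> \<and> sets \<mu> = sets borel \<and>
     integrable \<mu> (\<lambda>x. x) \<and> (\<integral>x. x \<partial>\<mu>) = 0 \<and>
     (\<exists>\<rho>::real \<Rightarrow> real. \<rho> \<in> borel_measurable borel \<and> (\<forall>x. 0 \<le> \<rho> x) \<and>
        \<mu> = density lborel (\<lambda>x. ennreal (\<rho> x)) \<and>
        (\<exists>(n::nat) (Am::nat \<Rightarrow> real) (Ap::nat \<Rightarrow> real) (sm::nat \<Rightarrow> real)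
            (sp::nat \<Rightarrow> real) (C::real).
           n \<ge> 1 \<and> C > 0 \<and>
           (\<forall>j<n. Am j < Ap j) \<and>
           (\<forall>j. Suc j < n \<longrightarrow> Ap j < Am (Suc j)) \<and>
           (\<forall>j<n. -1 < sm j \<and> sm j < 1 \<and> -1 < sp j \<and> sp j < 1) \<and>
           (AE x in lborel. x \<notin> (\<Union>j<n. {Am j..Ap j}) \<longrightarrow> \<rho> x = 0) \<and>
           (\<forall>j<n. AE x in lborel. x \<in> {Am j..Ap j} \<longrightarrow>
               1 / C < \<rho> x / ((x - Am j) powr sm j * (Ap j - x) powr sp j) \<and>
               \<rho> x / ((x - Am j) powr sm j * (Ap j - x) powr sp j) < C)))"

definition subordination :: "real measure \<Rightarrow> real measure \<Rightarrow>
    (complex \<Rightarrow> complex) \<Rightarrow> (complex \<Rightarrow> complex) \<Rightarrow> bool" where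
  "subordination \<mu>a \<mu>b \<omega>a \<omega>b \<longleftrightarrow>
     \<omega>a holomorphic_on {z. Im z > 0} \<and> \<omega>b holomorphic_on {z. Im z > 0} \<and>
     (\<forall>z. Im z > 0 \<longrightarrow> Im (\<omega>a z) \<ge> Im z \<and> Im (\<omega>b z) \<ge> Im z) \<and>
     ((\<lambda>\<eta>. \<omega>a (\<i> * of_real \<eta>) / (\<i> * of_real \<eta>)) \<longlongrightarrow> 1) at_top \<and>
     ((\<lambda>\<eta>. \<omega>b (\<i> * of_real \<eta>) / (\<i> * of_real \<eta>)) \<longlongrightarrow> 1) at_top \<and>
     (\<forall>z. Im z > 0 \<longrightarrow> \<omega>a z + \<omega>b z - z = F_tr \<mu>a (\<omega>b z) \<and>
                        \<omega>a z + \<omega>b z - z = F_tr \<mu>b (\<omega>a z)) \<and>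
     continuous_on {z. Im z \<ge> 0} \<omega>a \<and> continuous_on {z. Im z \<ge> 0} \<omega>b"

text \<open>nu is the free additive convolution mu_a boxplus mu_b, characterised by
  F_nu = F_{mu_a} o omega_b on the upper half plane.\<close>
definition is_free_conv :: "real measure \<Rightarrow> real measure \<Rightarrow> (complex \<Rightarrow> complex) \<Rightarrow> bool" where
  "is_free_conv \<nu> \<mu>a \<omega>b \<longleftrightarrow>
     prob_space \<nu> \<and> sets \<nu> = sets borel \<and>
     (\<forall>z. Im z > 0 \<longrightarrow> F_tr \<nu> z = F_tr \<mu>a (\<omega>b z))"

definition is_hat :: "real measure \<Rightarrow> real measure \<Rightarrow> bool" where
  "is_hat \<mu>h \<mu> \<longleftrightarrow>
     finite_measure \<mu>h \<and> sets \<mu>h = sets borel \<and>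
     (\<forall>w. Im w > 0 \<longrightarrow> F_tr \<mu> w - w = stieltjes \<mu>h w)"

end

theory Submission
  imports Defs
begin

(* Lower bounds: I_nu is lower semicontinuous (Fatou) and strictly positive unless nu is a
   multiple of a point mass, hence bounded below on compact sets.  Under Assumption B the
   measures mu_a, mu_b have no atoms, and hat-mu is not a point mass either: if
   hat-mu = c delta_p then F_mu(w) = w + c / (p - w), so m_mu = -1 / F_mu would be the
   Stieltjes transform of a measure with an atom at a root of r^2 = p r + c.  As omega_a, omega_b
   are continuous on the closed upper half plane, they map J into compact sets.

   Upper bounds: Im (F_mu(w) - w) = Im w * I_hat-mu(w), so for Im z = eta > 0 the
   subordination equations give Im omega_a - eta = Im omega_b * I_hat-mu_a(omega_b) and
   Im omega_b - eta = Im omega_a * I_hat-mu_b(omega_a).  Multiplying,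
   I_hat-mu_a(omega_b) * I_hat-mu_b(omega_a) <= 1, and the lower bound on the second factor
   bounds the first; lower semicontinuity carries this to eta = 0. *)

lemma Im_le_norm_of_real_minus: "Im w \<le> cmod (complex_of_real x - w)"
  using abs_Im_le_cmod[of "complex_of_real x - w"] by simp

lemma
  assumes "finite_measure M" "sets M = sets borel" "Im w > 0"
  shows integrable_stieltjes_kernel: "integrable M (\<lambda>x. 1 / (complex_of_real x - w))"
    and integrable_I_tr_kernel: "integrable M (\<lambda>x. 1 / (cmod (complex_of_real x - w))\<^sup>2)"
proof -
  interpret finite_measure M by fact
  have le: "Im w \<le> cmod (complex_of_real x - w)" for x
    by (rule Im_le_norm_of_real_minus)
  show "integrable M (\<lambda>x. 1 / (complex_of_real x - w))"
  proof (rule integrable_const_bound[where B = "1 / Im w"])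
    show "AE x in M. norm (1 / (complex_of_real x - w)) \<le> 1 / Im w"
      using le assms(3) by (auto simp: norm_divide intro!: frac_le)
  qed (simp add: measurable_cong_sets[OF assms(2) refl])
  show "integrable M (\<lambda>x. 1 / (cmod (complex_of_real x - w))\<^sup>2)"
  proof (rule integrable_const_bound[where B = "1 / (Im w)\<^sup>2"])
    show "AE x in M. norm (1 / (cmod (complex_of_real x - w))\<^sup>2) \<le> 1 / (Im w)\<^sup>2"
      using le assms(3) by (auto intro!: frac_le power_mono)
  qed (simp add: measurable_cong_sets[OF assms(2) refl])
qed

lemma Im_stieltjes:
  assumes "finite_measure M" "sets M = sets borel" "Im w > 0"
  shows "Im (stieltjes M w) = Im w * (\<integral>x. 1 / (cmod (complex_of_real x - w))\<^sup>2 \<partial>M)"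
proof -
  have "Im (stieltjes M w) = (\<integral>x. Im (1 / (complex_of_real x - w)) \<partial>M)"
    unfolding stieltjes_def using integrable_stieltjes_kernel[OF assms] by simp
  also have "\<dots> = (\<integral>x. Im w * (1 / (cmod (complex_of_real x - w))\<^sup>2) \<partial>M)"
    by (simp add: Im_divide cmod_power2)
  also have "\<dots> = Im w * (\<integral>x. 1 / (cmod (complex_of_real x - w))\<^sup>2 \<partial>M)"
    by (rule integral_mult_right_zero)
  finally show ?thesis .
qed

lemma I_tr_eq_integral:
  assumes "finite_measure M" "sets M = sets borel" "Im w > 0"
  shows "I_tr M w = ennreal (\<integral>x. 1 / (cmod (complex_of_real x - w))\<^sup>2 \<partial>M)"
  unfolding I_tr_def using integrable_I_tr_kernel[OF assms]
  by (intro nn_integral_eq_integral) auto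

lemma I_tr_lower_semicontinuous:
  assumes "sets M = sets borel" "w \<longlonglongrightarrow> w0"
  shows "I_tr M w0 \<le> liminf (\<lambda>n. I_tr M (w n))"
proof -
  define u where "u n x = ennreal (1 / (cmod (complex_of_real x - w n))\<^sup>2)" for n x
  have "I_tr M w0 \<le> (\<integral>\<^sup>+x. liminf (\<lambda>n. u n x) \<partial>M)"
    unfolding I_tr_def
  proof (rule nn_integral_mono)
    fix x
    show "ennreal (1 / (cmod (complex_of_real x - w0))\<^sup>2) \<le> liminf (\<lambda>n. u n x)"
    proof (cases "complex_of_real x = w0")
      case False
      then have "(\<lambda>n. u n x) \<longlonglongrightarrow> ennreal (1 / (cmod (complex_of_real x - w0))\<^sup>2)"
        unfolding u_def
        by (intro tendsto_ennrealI tendsto_divide tendsto_power tendsto_norm tendsto_diff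
            tendsto_const assms(2)) auto
      then show ?thesis by (simp add: lim_imp_Liminf)
    qed simp
  qed
  also have "\<dots> \<le> liminf (\<lambda>n. integral\<^sup>N M (u n))"
    by (rule nn_integral_liminf) (simp add: u_def measurable_cong_sets[OF assms(1) refl])
  finally show ?thesis unfolding u_def I_tr_def .
qed

(* With 1 / 0 = 0 the integrand vanishes at x = w, so I_tr M w = 0 exactly when M is
   concentrated at a real point w. *)
lemma I_tr_pos:
  assumes "sets M = sets borel" "\<And>p. emeasure M (UNIV - {p}) > 0"
  shows "I_tr M w > 0"
proof (rule ccontr)
  assume "\<not> I_tr M w > 0"
  then have "AE x in M. ennreal (1 / (cmod (complex_of_real x - w))\<^sup>2) = 0"
    unfolding I_tr_def
    by (subst nn_integral_0_iff_AE[symmetric]) (auto simp: measurable_cong_sets[OF assms(1) refl])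
  then have "AE x in M. x = Re w"
    by eventually_elim (auto simp: complex_eq_iff)
  moreover have "{x \<in> space M. x \<noteq> Re w} = UNIV - {Re w}"
    using sets_eq_imp_space_eq[OF assms(1)] by auto
  ultimately have "emeasure M (UNIV - {Re w}) = 0"
    using AE_iff_measurable[of "UNIV - {Re w}" M "\<lambda>x. x = Re w"] assms(1) by simp
  with assms(2)[of "Re w"] show False by simp
qed

lemma compact_lower_semicontinuous_pos_imp_bounded_below:
  fixes f :: "'a::metric_space \<Rightarrow> ennreal"
  assumes "compact K" "\<And>w. w \<in> K \<Longrightarrow> f w > 0"
    and lsc: "\<And>w w0. (\<And>n. w n \<in> K) \<Longrightarrow> w \<longlonglongrightarrow> w0 \<Longrightarrow> f w0 \<le> liminf (\<lambda>n. f (w n))"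
  shows "\<exists>\<delta>>0. \<forall>w\<in>K. ennreal \<delta> \<le> f w"
proof (rule ccontr)
  assume "\<not> ?thesis"
  then have "\<forall>n. \<exists>w\<in>K. f w < ennreal (inverse (Suc n))"
    by (metis inverse_positive_iff_positive linorder_not_le of_nat_0_less_iff zero_less_Suc)
  then obtain w where w: "\<And>n. w n \<in> K" "\<And>n. f (w n) < ennreal (inverse (Suc n))"
    by metis
  obtain l r where l: "l \<in> K" "strict_mono r" "(w \<circ> r) \<longlonglongrightarrow> l"
    using seq_compactE[OF compact_imp_seq_compact[OF assms(1)]] w(1) by metis
  have "f (w (r n)) \<le> ennreal (inverse (Suc n))" for n
  proof -
    have "inverse (real (Suc (r n))) \<le> inverse (Suc n)"
      using seq_suble[OF l(2), of n] by (simp add: le_imp_inverse_le)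
    then show ?thesis using w(2)[of "r n"] by (meson ennreal_leI less_imp_le order_trans)
  qed
  then have "liminf (\<lambda>n. f (w (r n))) \<le> liminf (\<lambda>n. ennreal (inverse (Suc n)))"
    by (intro Liminf_mono) auto
  also have "\<dots> = 0"
    using tendsto_ennrealI[OF LIMSEQ_inverse_real_of_nat] by (intro lim_imp_Liminf) simp_all
  finally have "liminf (\<lambda>n. f (w (r n))) \<le> 0" .
  moreover have "f l \<le> liminf (\<lambda>n. f (w (r n)))"
    using lsc[of "w \<circ> r" l] w(1) l(3) by (simp add: comp_def)
  ultimately have "f l = 0"
    by simp
  with assms(2)[OF l(1)] show False by simp
qed

lemma I_tr_bounded_below:
  assumes "compact K" "sets M = sets borel" "\<And>p. emeasure M (UNIV - {p}) > 0"
  shows "\<exists>\<delta>>0. \<forall>w\<in>K. ennreal \<delta> \<le> I_tr M w"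
  using assms I_tr_pos I_tr_lower_semicontinuous
  by (intro compact_lower_semicontinuous_pos_imp_bounded_below) auto

lemma assumption_B_no_atoms:
  assumes "assumption_B \<mu>"
  shows "emeasure \<mu> {r} = 0"
proof -
  obtain \<rho> where \<rho>: "\<rho> \<in> borel_measurable borel" "\<mu> = density lborel (\<lambda>x. ennreal (\<rho> x))"
    using assms unfolding assumption_B_def by blast
  have "emeasure \<mu> {r} = (\<integral>\<^sup>+x. ennreal (\<rho> x) * indicator {r} x \<partial>lborel)"
    unfolding \<rho>(2) using \<rho>(1) by (intro emeasure_density) auto
  also have "\<dots> = 0"
    by (rule nn_integral_null_set) (simp add: null_sets_def)
  finally show ?thesis .
qed

lemma prob_space_no_atoms_not_point_mass:
  fixes M :: "real measure"
  assumes "prob_space M" "sets M = sets borel" "\<And>r. emeasure M {r} = 0"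
  shows "emeasure M (UNIV - {p}) > 0"
proof -
  interpret prob_space M by fact
  have "emeasure M (UNIV - {p}) = emeasure M UNIV - emeasure M {p}"
    by (rule emeasure_Diff) (simp_all add: assms(2))
  also have "\<dots> = 1"
    using assms(3)[of p] emeasure_space_1 sets_eq_imp_space_eq[OF assms(2)] by simp
  finally show ?thesis by simp
qed

lemma stieltjes_residue_no_atom:
  assumes "finite_measure M" "sets M = sets borel" "emeasure M {r} = 0"
    and \<eta>: "\<And>n. \<eta> n > 0" "\<eta> \<longlonglongrightarrow> 0"
  shows "(\<lambda>n. \<eta> n * Im (stieltjes M (Complex r (\<eta> n)))) \<longlonglongrightarrow> 0"
proof -
  interpret finite_measure M by fact
  define g where "g n x = (\<eta> n)\<^sup>2 * (1 / (cmod (complex_of_real x - Complex r (\<eta> n)))\<^sup>2)"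
    for n x
  have "\<eta> n * Im (stieltjes M (Complex r (\<eta> n))) = (\<integral>x. g n x \<partial>M)" for n
  proof -
    have "(\<integral>x. g n x \<partial>M) = (\<eta> n)\<^sup>2 * (\<integral>x. 1 / (cmod (complex_of_real x - Complex r (\<eta> n)))\<^sup>2 \<partial>M)"
      unfolding g_def by (rule integral_mult_right_zero)
    then show ?thesis
      using Im_stieltjes[OF assms(1,2), of "Complex r (\<eta> n)"] \<eta>(1)[of n]
      by (simp add: power2_eq_square)
  qed
  moreover have "(\<lambda>n. \<integral>x. g n x \<partial>M) \<longlonglongrightarrow> (\<integral>x. 0 \<partial>M)"
  proof (rule integral_dominated_convergence[where w = "\<lambda>x. 1"])
    show "g n \<in> borel_measurable M" for n
      unfolding g_def measurable_cong_sets[OF assms(2) refl] by measurable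
    have "AE x in M. x \<noteq> r"
      using assms(2,3) by (intro AE_I'[of "{r}"]) (auto simp: null_sets_def)
    then show "AE x in M. (\<lambda>n. g n x) \<longlonglongrightarrow> 0"
    proof eventually_elim
      case (elim x)
      have "(\<lambda>n. g n x) \<longlonglongrightarrow> 0\<^sup>2 * (1 / (cmod (complex_of_real x - Complex r 0))\<^sup>2)"
        unfolding g_def using elim
        by (intro tendsto_intros \<eta>(2)) (auto simp: Complex_eq)
      then show ?case by simp
    qed
    show "AE x in M. norm (g n x) \<le> 1" for n
    proof (rule AE_I2)
      fix x
      have "\<eta> n \<le> cmod (complex_of_real x - Complex r (\<eta> n))"
        using Im_le_norm_of_real_minus[of "Complex r (\<eta> n)" x] by simp
      then show "norm (g n x) \<le> 1"
        using \<eta>(1)[of n] by (auto simp: g_def divide_le_eq_1 intro: power_mono)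
    qed
  qed simp_all
  ultimately show ?thesis by simp
qed

lemma stieltjes_point_mass:
  fixes M :: "real measure"
  assumes "finite_measure M" "sets M = sets borel" "AE x in M. x = p"
  shows "stieltjes M w = complex_of_real (measure M UNIV) / (complex_of_real p - w)"
proof -
  have "stieltjes M w = (\<integral>x. 1 / (complex_of_real p - w) \<partial>M)"
    unfolding stieltjes_def
  proof (rule integral_cong_AE)
    show "AE x in M. 1 / (complex_of_real x - w) = 1 / (complex_of_real p - w)"
      using assms(3) by eventually_elim simp
  qed (simp_all add: measurable_cong_sets[OF assms(2) refl])
  then show ?thesis
    using sets_eq_imp_space_eq[OF assms(2)] by (simp add: scaleR_conv_of_real)
qed

lemma Im_neg_inverse_point_mass_F:
  fixes p c r \<eta> :: real
  assumes "\<eta> > 0" "r\<^sup>2 = p * r + c"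
  shows "\<eta> * Im (-1 / (Complex r \<eta> + complex_of_real c / (complex_of_real p - Complex r \<eta>)))
     = ((r - p) * (2 * r - p) + \<eta>\<^sup>2) / (\<eta>\<^sup>2 + (2 * r - p)\<^sup>2)"
proof -
  define s where "s = 2 * r - p"
  define w where "w = Complex r \<eta>"
  have pw: "complex_of_real p - w \<noteq> 0"
    using assms(1) by (auto simp: w_def complex_eq_iff)
  have num: "w * (complex_of_real p - w) + complex_of_real c = Complex (\<eta>\<^sup>2) (- \<eta> * s)"
    using assms(2) by (simp add: complex_eq_iff w_def s_def algebra_simps power2_eq_square)
  have den: "Complex (\<eta>\<^sup>2) (- \<eta> * s) \<noteq> 0"
    using assms(1) by (simp add: complex_eq_iff)
  have "-1 / (w + complex_of_real c / (complex_of_real p - w))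
      = (w - complex_of_real p) / Complex (\<eta>\<^sup>2) (- \<eta> * s)"
    using pw den num[symmetric] by (simp add: field_simps)
  also have "w - complex_of_real p = Complex (r - p) \<eta>"
    by (simp add: complex_eq_iff w_def)
  finally have "\<eta> * Im (-1 / (w + complex_of_real c / (complex_of_real p - w)))
      = \<eta> * (\<eta> * \<eta>\<^sup>2 + (r - p) * (\<eta> * s)) / ((\<eta>\<^sup>2)\<^sup>2 + (\<eta> * s)\<^sup>2)"
    by (simp add: Im_divide power2_eq_square)
  also have "\<dots> = (\<eta>\<^sup>2 * ((r - p) * s + \<eta>\<^sup>2)) / (\<eta>\<^sup>2 * (\<eta>\<^sup>2 + s\<^sup>2))"
    by (simp add: power2_eq_square algebra_simps)
  also have "\<dots> = ((r - p) * s + \<eta>\<^sup>2) / (\<eta>\<^sup>2 + s\<^sup>2)"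
    using assms(1) by simp
  finally show ?thesis by (simp add: w_def s_def)
qed

(* For c > 0, -1 / (w + c / (p - w)) = (p - w) / ((w - r) (w - r')) with r, r' the roots of
   r^2 = p r + c; this is the Stieltjes transform of a measure whose atom at the larger root r
   has mass (r - p) / (2 r - p) > 0.  For c = 0 it is -1 / w, the unit mass at 0. *)
lemma neg_inverse_point_mass_F_has_atom:
  fixes c p :: real and \<eta> :: "nat \<Rightarrow> real"
  assumes "c \<ge> 0" "\<And>n. \<eta> n > 0" "\<eta> \<longlonglongrightarrow> 0"
  shows "\<exists>r q. q > 0 \<and>
    (\<lambda>n. \<eta> n * Im (-1 / (Complex r (\<eta> n) + complex_of_real c / (complex_of_real p - Complex r (\<eta> n)))))
      \<longlonglongrightarrow> q"
proof (cases "c = 0")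
  case True
  have "\<eta> n * Im (-1 / (Complex 0 (\<eta> n) + complex_of_real c / (complex_of_real p - Complex 0 (\<eta> n)))) = 1"
    for n
    using True assms(2)[of n] by (simp add: Im_divide power2_eq_square)
  then show ?thesis by (intro exI[of _ 0] exI[of _ 1]) simp
next
  case False
  define S where "S = sqrt (p\<^sup>2 + 4 * c)"
  define r where "r = (p + S) / 2"
  have "sqrt (p\<^sup>2) < S"
    unfolding S_def using assms(1) False by (intro real_sqrt_less_mono) simp
  then have "\<bar>p\<bar> < S" by simp
  then have pos: "r - p > 0" "2 * r - p > 0" unfolding r_def by auto
  have root: "r\<^sup>2 = p * r + c"
    using assms(1) unfolding r_def S_def by (simp add: power2_eq_square field_simps)
  have "(\<lambda>n. ((r - p) * (2 * r - p) + (\<eta> n)\<^sup>2) / ((\<eta> n)\<^sup>2 + (2 * r - p)\<^sup>2))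
      \<longlonglongrightarrow> ((r - p) * (2 * r - p) + 0\<^sup>2) / (0\<^sup>2 + (2 * r - p)\<^sup>2)"
    using pos by (intro tendsto_intros assms(3)) simp
  then show ?thesis
    using pos Im_neg_inverse_point_mass_F[OF assms(2) root]
    by (intro exI[of _ r] exI[of _ "(r - p) * (2 * r - p) / (2 * r - p)\<^sup>2"]) simp
qed

lemma hat_not_point_mass:
  fixes M Mh :: "real measure"
  assumes "is_hat Mh M" "prob_space M" "sets M = sets borel" "\<And>r. emeasure M {r} = 0"
  shows "emeasure Mh (UNIV - {p}) > 0"
proof (rule ccontr)
  assume null: "\<not> emeasure Mh (UNIV - {p}) > 0"
  have Mh: "finite_measure Mh" "sets Mh = sets borel"
    and hat: "\<And>w. Im w > 0 \<Longrightarrow> F_tr M w - w = stieltjes Mh w"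
    using assms(1) unfolding is_hat_def by auto
  have "AE x in Mh. x = p"
    using null Mh(2) sets_eq_imp_space_eq[OF Mh(2)]
    by (intro AE_I'[of "UNIV - {p}"]) (auto simp: null_sets_def)
  define c where "c = measure Mh UNIV"
  have m: "stieltjes M w = -1 / (w + complex_of_real c / (complex_of_real p - w))" if "Im w > 0" for w
  proof -
    have "stieltjes M w = -1 / F_tr M w"
      unfolding F_tr_def by (cases "stieltjes M w = 0") simp_all
    moreover have "F_tr M w = w + complex_of_real c / (complex_of_real p - w)"
      using hat[OF that] stieltjes_point_mass[OF Mh \<open>AE x in Mh. x = p\<close>]
      unfolding c_def by (simp add: algebra_simps)
    ultimately show ?thesis by simp
  qed
  define \<eta> where "\<eta> n = inverse (real (Suc n))" for n
  have \<eta>: "\<And>n. \<eta> n > 0" "\<eta> \<longlonglongrightarrow> 0"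
    unfolding \<eta>_def by (simp, rule LIMSEQ_inverse_real_of_nat)
  obtain r q where "q > 0"
    and lim_q: "(\<lambda>n. \<eta> n * Im (stieltjes M (Complex r (\<eta> n)))) \<longlonglongrightarrow> q"
    using neg_inverse_point_mass_F_has_atom[OF _ \<eta>, of c p] m \<eta>(1) by (auto simp: c_def)
  have "(\<lambda>n. \<eta> n * Im (stieltjes M (Complex r (\<eta> n)))) \<longlonglongrightarrow> 0"
    using assms(2) unfolding prob_space_def
    by (intro stieltjes_residue_no_atom[OF _ assms(3,4) \<eta>]) simp
  with \<open>q > 0\<close> show False
    using LIMSEQ_unique[OF lim_q] by simp
qed

lemma subordination_swap:
  assumes "subordination \<mu>a \<mu>b \<omega>a \<omega>b"
  shows "subordination \<mu>b \<mu>a \<omega>b \<omega>a"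
  using assms unfolding subordination_def by (auto simp: add.commute)

lemma I_tr_hat_le_inverse:
  assumes "is_hat Mha Ma" "is_hat Mhb Mb"
    and "Im z > 0" "Im z \<le> Im v" "Im z \<le> Im w"
    and "v + w - z = F_tr Ma w" "v + w - z = F_tr Mb v"
    and "\<delta> > 0" "ennreal \<delta> \<le> I_tr Mhb v"
  shows "I_tr Mha w \<le> ennreal (1 / \<delta>)"
proof -
  have Mha: "finite_measure Mha" "sets Mha = sets borel"
    and Mhb: "finite_measure Mhb" "sets Mhb = sets borel"
    using assms(1,2) unfolding is_hat_def by auto
  have w: "Im w > 0" and v: "Im v > 0"
    using assms(3-5) by auto
  define Ia where "Ia = (\<integral>x. 1 / (cmod (complex_of_real x - w))\<^sup>2 \<partial>Mha)"
  define Ib where "Ib = (\<integral>x. 1 / (cmod (complex_of_real x - v))\<^sup>2 \<partial>Mhb)"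
  have "Ia \<ge> 0" "Ib \<ge> 0"
    unfolding Ia_def Ib_def by simp_all
  have "stieltjes Mha w = F_tr Ma w - w"
    using assms(1) w unfolding is_hat_def by simp
  then have "stieltjes Mha w = v - z"
    unfolding assms(6)[symmetric] by simp
  then have a: "Im v - Im z = Im w * Ia"
    using Im_stieltjes[OF Mha w] unfolding Ia_def by simp
  have "stieltjes Mhb v = F_tr Mb v - v"
    using assms(2) v unfolding is_hat_def by simp
  then have "stieltjes Mhb v = w - z"
    unfolding assms(7)[symmetric] by simp
  then have b: "Im w - Im z = Im v * Ib"
    using Im_stieltjes[OF Mhb v] unfolding Ib_def by simp
  have "(Im v * Im w) * (Ia * Ib) = (Im w * Ia) * (Im v * Ib)"
    by (simp add: algebra_simps)
  also have "\<dots> = (Im v - Im z) * (Im w - Im z)"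
    using a b by simp
  also have "\<dots> = Im v * Im w - Im z * (Im v - Im z) - Im z * Im w"
    by (simp add: algebra_simps)
  also have "\<dots> \<le> (Im v * Im w) * 1"
    using assms(3,4) w mult_nonneg_nonneg[of "Im z" "Im v - Im z"] mult_pos_pos[of "Im z" "Im w"]
    by linarith
  finally have "Ia * Ib \<le> 1"
    using v w by (simp add: mult_le_cancel_left_pos)
  moreover have "\<delta> \<le> Ib"
    using assms(9) I_tr_eq_integral[OF Mhb v] \<open>Ib \<ge> 0\<close> unfolding Ib_def[symmetric] by simp
  ultimately have "Ia * \<delta> \<le> 1"
    using \<open>Ia \<ge> 0\<close> by (meson mult_left_mono order_trans)
  then show ?thesis
    using assms(8) I_tr_eq_integral[OF Mha w]
    unfolding Ia_def[symmetric] by (simp add: le_divide_eq ennreal_leI)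
qed

lemma subordination_I_tr_bounds:
  fixes \<mu>a \<mu>b \<mu>ha \<mu>hb :: "real measure"
  assumes "assumption_B \<mu>a" "assumption_B \<mu>b" "subordination \<mu>a \<mu>b \<omega>a \<omega>b"
    and "is_hat \<mu>ha \<mu>a" "is_hat \<mu>hb \<mu>b"
    and "compact K" "K \<subseteq> {z. Im z \<ge> 0}"
  shows "\<exists>c1 c2 c3 :: real. c1 > 0 \<and> c2 > 0 \<and> c3 > 0 \<and>
    (\<forall>z\<in>K. ennreal c1 \<le> I_tr \<mu>a (\<omega>b z) \<and> ennreal c2 \<le> I_tr \<mu>ha (\<omega>b z) \<and>
             I_tr \<mu>ha (\<omega>b z) \<le> ennreal c3)"
proof -
  have \<mu>: "prob_space \<mu>" "sets \<mu> = sets borel" "\<And>r. emeasure \<mu> {r} = 0"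
    if "assumption_B \<mu>" for \<mu>
    using that assumption_B_no_atoms unfolding assumption_B_def by blast+
  have \<mu>a: "sets \<mu>a = sets borel" "\<And>p. emeasure \<mu>a (UNIV - {p}) > 0"
    using \<mu>[OF assms(1)] by (auto intro: prob_space_no_atoms_not_point_mass)
  have \<mu>h: "sets \<mu>h = sets borel" "\<And>p. emeasure \<mu>h (UNIV - {p}) > 0"
    if "is_hat \<mu>h \<mu>" "assumption_B \<mu>" for \<mu>h \<mu>
    using that(1) hat_not_point_mass[OF that(1) \<mu>[OF that(2)]] unfolding is_hat_def by blast+
  have \<omega>: "continuous_on {z. Im z \<ge> 0} \<omega>a" "continuous_on {z. Im z \<ge> 0} \<omega>b"
    and Im_\<omega>: "\<And>z. Im z > 0 \<Longrightarrow> Im z \<le> Im (\<omega>a z) \<and> Im z \<le> Im (\<omega>b z)"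
    and F: "\<And>z. Im z > 0 \<Longrightarrow> \<omega>a z + \<omega>b z - z = F_tr \<mu>a (\<omega>b z) \<and> \<omega>a z + \<omega>b z - z = F_tr \<mu>b (\<omega>a z)"
    using assms(3) unfolding subordination_def by auto
  \<comment> \<open>L adds to K the vertical segments of length 1 above it, so every point of K is a
    limit of points of L in the open upper half plane.\<close>
  define L where "L = (\<lambda>p. fst p + \<i> * complex_of_real (snd p)) ` (K \<times> {0..1})"
  have "compact L"
    unfolding L_def using assms(6)
    by (intro compact_continuous_image compact_Times compact_Icc) (auto intro!: continuous_intros)
  have L_half_plane: "L \<subseteq> {z. Im z \<ge> 0}"
    using assms(7) by (auto simp: L_def)
  have "compact (\<omega>a ` L)" "compact (\<omega>b ` L)"
    using \<open>compact L\<close> continuous_on_subset[OF \<omega>(1) L_half_plane]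
      continuous_on_subset[OF \<omega>(2) L_half_plane]
    by (simp_all add: compact_continuous_image)
  obtain c1 where "c1 > 0" and c1: "\<forall>w\<in>\<omega>b ` L. ennreal c1 \<le> I_tr \<mu>a w"
    using I_tr_bounded_below[OF \<open>compact (\<omega>b ` L)\<close> \<mu>a] by blast
  obtain c2 where "c2 > 0" and c2: "\<forall>w\<in>\<omega>b ` L. ennreal c2 \<le> I_tr \<mu>ha w"
    using I_tr_bounded_below[OF \<open>compact (\<omega>b ` L)\<close> \<mu>h[OF assms(4,1)]] by blast
  obtain d where "d > 0" and d: "\<forall>w\<in>\<omega>a ` L. ennreal d \<le> I_tr \<mu>hb w"
    using I_tr_bounded_below[OF \<open>compact (\<omega>a ` L)\<close> \<mu>h[OF assms(5,2)]] by blast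
  have upper: "I_tr \<mu>ha (\<omega>b z) \<le> ennreal (1 / d)" if "z \<in> K" for z
  proof -
    define zn where "zn n = z + \<i> * complex_of_real (inverse (Suc n))" for n
    have zn_L: "zn n \<in> L" for n
      unfolding L_def zn_def using that
      by (intro image_eqI[of _ _ "(z, inverse (Suc n))"]) (auto simp: inverse_le_1_iff)
    have zn_pos: "Im (zn n) > 0" for n
      using that assms(7) by (auto simp: zn_def add_nonneg_pos)
    have bound: "I_tr \<mu>ha (\<omega>b (zn n)) \<le> ennreal (1 / d)" for n
      using Im_\<omega>[OF zn_pos] F[OF zn_pos] \<open>d > 0\<close> d zn_L
      by (intro I_tr_hat_le_inverse[OF assms(4,5) zn_pos, where v = "\<omega>a (zn n)"]) auto
    have "zn \<longlonglongrightarrow> z + \<i> * complex_of_real 0"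
      unfolding zn_def by (intro tendsto_intros LIMSEQ_inverse_real_of_nat)
    then have "(\<lambda>n. \<omega>b (zn n)) \<longlonglongrightarrow> \<omega>b z"
      using that assms(7) zn_pos
      by (intro continuous_on_tendsto_compose[OF \<omega>(2)] always_eventually) (auto intro: less_imp_le)
    then have "I_tr \<mu>ha (\<omega>b z) \<le> liminf (\<lambda>n. I_tr \<mu>ha (\<omega>b (zn n)))"
      by (rule I_tr_lower_semicontinuous[OF \<mu>h(1)[OF assms(4,1)]])
    also have "\<dots> \<le> ennreal (1 / d)"
      using bound by (intro Liminf_le) simp_all
    finally show ?thesis .
  qed
  show ?thesis
  proof (intro exI conjI ballI)
    fix z assume "z \<in> K"
    then have "\<omega>b z \<in> \<omega>b ` L"
      unfolding L_def by (intro imageI image_eqI[of _ _ "(z, 0)"]) auto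
    then show "ennreal c1 \<le> I_tr \<mu>a (\<omega>b z)" "ennreal c2 \<le> I_tr \<mu>ha (\<omega>b z)"
      using c1 c2 by blast+
    show "I_tr \<mu>ha (\<omega>b z) \<le> ennreal (1 / d)"
      using upper[OF \<open>z \<in> K\<close>] .
  qed (use \<open>c1 > 0\<close> \<open>c2 > 0\<close> \<open>d > 0\<close> in simp_all)
qed

theorem lemma4p5:
  fixes \<mu>a \<mu>b \<nu> \<mu>ha \<mu>hb :: "real measure"
    and \<omega>a \<omega>b :: "complex \<Rightarrow> complex"
    and a b :: real and Oa Ob :: "real set"
  assumes "assumption_B \<mu>a" and "assumption_B \<mu>b"
    and "subordination \<mu>a \<mu>b \<omega>a \<omega>b"
    and "is_free_conv \<nu> \<mu>a \<omega>b"
    and "is_hat \<mu>ha \<mu>a" and "is_hat \<mu>hb \<mu>b"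
    and "a \<le> b" and "msupport \<nu> \<subseteq> {a..b}"
    and "open Oa" and "stieltjes_zero_set \<mu>a \<subseteq> Oa"
    and "open Ob" and "stieltjes_zero_set \<mu>b \<subseteq> Ob"
  defines "J \<equiv> {Complex E \<eta> | E \<eta>. E \<in> {a..b} \<and> 0 \<le> \<eta> \<and> \<eta> \<le> 1}"
  shows "\<exists>c1a c2a c3a c1b c2b c3b :: real.
           c1a > 0 \<and> c2a > 0 \<and> c3a > 0 \<and> c1b > 0 \<and> c2b > 0 \<and> c3b > 0 \<and>
           (\<forall>z\<in>J. Re z \<notin> Ob \<longrightarrow>
              ennreal c1a \<le> I_tr \<mu>a (\<omega>b z) \<and>
              ennreal c2a \<le> I_tr \<mu>ha (\<omega>b z) \<and>
              I_tr \<mu>ha (\<omega>b z) \<le> ennreal c3a) \<and>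
           (\<forall>z\<in>J. Re z \<notin> Oa \<longrightarrow>
              ennreal c1b \<le> I_tr \<mu>b (\<omega>a z) \<and>
              ennreal c2b \<le> I_tr \<mu>hb (\<omega>a z) \<and>
              I_tr \<mu>hb (\<omega>a z) \<le> ennreal c3b)"
proof -
  have "J = cbox (Complex a 0) (Complex b 1)"
  proof (rule set_eqI)
    show "z \<in> J \<longleftrightarrow> z \<in> cbox (Complex a 0) (Complex b 1)" for z
      unfolding J_def in_cbox_complex_iff by (cases z) auto
  qed
  then have J: "compact J" "J \<subseteq> {z. Im z \<ge> 0}"
    by (auto simp: in_cbox_complex_iff)
  obtain c1a c2a c3a where "c1a > 0" "c2a > 0" "c3a > 0"
    and A: "\<forall>z\<in>J. ennreal c1a \<le> I_tr \<mu>a (\<omega>b z) \<and> ennreal c2a \<le> I_tr \<mu>ha (\<omega>b z) \<and>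
                   I_tr \<mu>ha (\<omega>b z) \<le> ennreal c3a"
    using subordination_I_tr_bounds[OF assms(1,2,3,5,6) J] by blast
  obtain c1b c2b c3b where "c1b > 0" "c2b > 0" "c3b > 0"
    and B: "\<forall>z\<in>J. ennreal c1b \<le> I_tr \<mu>b (\<omega>a z) \<and> ennreal c2b \<le> I_tr \<mu>hb (\<omega>a z) \<and>
                   I_tr \<mu>hb (\<omega>a z) \<le> ennreal c3b"
    using subordination_I_tr_bounds[OF assms(2,1) subordination_swap[OF assms(3)] assms(6,5) J]
    by blast
  show ?thesis
  proof (rule exI[of _ c1a], rule exI[of _ c2a], rule exI[of _ c3a],
      rule exI[of _ c1b], rule exI[of _ c2b], rule exI[of _ c3b], intro conjI)
    show "\<forall>z\<in>J. Re z \<notin> Ob \<longrightarrow> ennreal c1a \<le> I_tr \<mu>a (\<omega>b z) \<and>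
        ennreal c2a \<le> I_tr \<mu>ha (\<omega>b z) \<and> I_tr \<mu>ha (\<omega>b z) \<le> ennreal c3a"
      using A by blast
    show "\<forall>z\<in>J. Re z \<notin> Oa \<longrightarrow> ennreal c1b \<le> I_tr \<mu>b (\<omega>a z) \<and>
        ennreal c2b \<le> I_tr \<mu>hb (\<omega>a z) \<and> I_tr \<mu>hb (\<omega>a z) \<le> ennreal c3b"
      using B by blast
  qed fact+
qed

end
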